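(* Let $x\in\Sigma^*$ be a word and let $Y\subseteq\Sigma^*$ be a nonempty language recognized by a nondeterministic finite automaton with $n$ states. Then there exists $y_x\in Y$ with $\mathrm{ned}(x,y_x)=\inf_{y\in Y}\mathrm{ned}(x,y)$, and moreover there exists an edit path $p$ from $x$ to $y_x$ with $\mathrm{wgt}(p)/|p|=\mathrm{ned}(x,y_x)$ and $|p|\le n(|x|+1)$.
   Context: $\Sigma$ is a finite alphabet. An edit path from $x$ to $y$ is a sequence $p=(a_1,b_1)\cdots(a_n,b_n)$ with $(a_i,b_i)\in(\Sigma\cup\{\varepsilon\})^2\setminus\{(\varepsilon,\varepsilon)\}$, $a_1\cdots a_n=x$, $b_1\cdots b_n=y$; $|p|=n$ and $\mathrm{wgt}(p)=|\{i:a_i\ne b_i\}|$. $\mathrm{ned}(x,y)=\min_p\mathrm{wgt}(p)/|p|$ over edit paths from $x$ to $y$ ($\mathrm{ned}(\varepsilon,\varepsilon)=0$). *)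

theory Defs
  imports Main "HOL.Real"
begin

text \<open>Words over the alphabet 'a are lists; the empty symbol is None.
An edit operation is a pair (a,b) of optional symbols, not both None.\<close>

type_synonym 'a edit_op = "'a option \<times> 'a option"

definition opt_word :: "'a option \<Rightarrow> 'a list" where
  "opt_word a = (case a of None \<Rightarrow> [] | Some c \<Rightarrow> [c])"

definition edit_path :: "'a edit_op list \<Rightarrow> 'a list \<Rightarrow> 'a list \<Rightarrow> bool" where
  "edit_path p x y \<longleftrightarrow>
     (\<forall>e\<in>set p. e \<noteq> (None, None)) \<and>
     concat (map (\<lambda>e. opt_word (fst e)) p) = x \<and>
     concat (map (\<lambda>e. opt_word (snd e)) p) = y"

definition wgt :: "'a edit_op list \<Rightarrow> nat" where
  "wgt p = length (filter (\<lambda>e. fst e \<noteq> snd e) p)"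

definition ned :: "'a list \<Rightarrow> 'a list \<Rightarrow> real" where
  "ned x y = (if x = [] \<and> y = [] then 0
              else Min {real (wgt p) / real (length p) | p. edit_path p x y})"

definition nfa :: "'s set \<Rightarrow> ('s \<Rightarrow> 'a \<Rightarrow> 's set) \<Rightarrow> 's set \<Rightarrow> 's set \<Rightarrow> bool" where
  "nfa Q \<delta> I F \<longleftrightarrow> finite Q \<and> I \<subseteq> Q \<and> F \<subseteq> Q \<and> (\<forall>q\<in>Q. \<forall>a. \<delta> q a \<subseteq> Q)"

fun nfa_run :: "('s \<Rightarrow> 'a \<Rightarrow> 's set) \<Rightarrow> 's set \<Rightarrow> 'a list \<Rightarrow> 's set" where
  "nfa_run \<delta> S [] = S"
| "nfa_run \<delta> S (a # w) = nfa_run \<delta> (\<Union>q\<in>S. \<delta> q a) w"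

definition nfa_lang :: "('s \<Rightarrow> 'a \<Rightarrow> 's set) \<Rightarrow> 's set \<Rightarrow> 's set \<Rightarrow> 'a list set" where
  "nfa_lang \<delta> I F = {w. nfa_run \<delta> I w \<inter> F \<noteq> {}}"

end

theory Submission
  imports Defs
begin

text \<open>An edit path from x to y consumes the letters of x one operation at a time; in between,
and before the first and after the last of these operations, it performs blocks of insertions,
and when y is accepted by the automaton each block spells a walk in it. Cutting loops replaces
every block by a walk between the same states with fewer than n letters, which gives an edit
path of length at most n(|x|+1) to another accepted word. Only insertions are removed, each of
weight one, and removing operations of weight one never increases the normalised weight
wgt p / |p|. Over paths of bounded length the normalised weights form a finite set, so the
infimum over the language is a minimum, attained by a short path.\<close>

lemma nfa_run_UN: "nfa_run \<delta> S w = (\<Union>q\<in>S. nfa_run \<delta> {q} w)"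
proof (induction w arbitrary: S)
  case (Cons a w)
  have "nfa_run \<delta> (\<delta> q a) w = (\<Union>q'\<in>\<delta> q a. nfa_run \<delta> {q'} w)" for q
    by (rule Cons.IH)
  then show ?case
    using Cons.IH[of "\<Union>q\<in>S. \<delta> q a"] by simp
qed simp

lemma nfa_run_append: "nfa_run \<delta> S (u @ v) = nfa_run \<delta> (nfa_run \<delta> S u) v"
  by (induction u arbitrary: S) auto

lemma mem_nfa_run_append:
  "s \<in> nfa_run \<delta> {q} (u @ v) \<longleftrightarrow> (\<exists>t\<in>nfa_run \<delta> {q} u. s \<in> nfa_run \<delta> {t} v)"
  using nfa_run_UN[of \<delta> "nfa_run \<delta> {q} u" v] by (simp add: nfa_run_append)

lemma nfa_run_subset:
  assumes "nfa Q \<delta> I F"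
  shows "S \<subseteq> Q \<Longrightarrow> nfa_run \<delta> S w \<subseteq> Q"
proof (induction w arbitrary: S)
  case (Cons a w)
  have "(\<Union>q\<in>S. \<delta> q a) \<subseteq> Q"
    using Cons.prems assms unfolding nfa_def by blast
  then show ?case
    using Cons.IH by simp
qed simp

lemma mem_nfa_lang: "w \<in> nfa_lang \<delta> I F \<longleftrightarrow> (\<exists>q\<in>I. \<exists>s\<in>F. s \<in> nfa_run \<delta> {q} w)"
  using nfa_run_UN[of \<delta> I w] by (auto simp: nfa_lang_def)

lemma nfa_run_short_word:
  assumes nfa: "nfa Q \<delta> I F" and q: "q \<in> Q" and s: "s \<in> nfa_run \<delta> {q} w"
  shows "\<exists>w'. s \<in> nfa_run \<delta> {q} w' \<and> length w' < card Q \<and> length w' \<le> length w"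
  using s
proof (induction "length w" arbitrary: w rule: less_induct)
  case less
  show ?case
  proof (cases "length w < card Q")
    case True
    then show ?thesis using less.prems by blast
  next
    case False
    \<comment> \<open>The intermediate states t i are chosen independently for each cut point i; any
      repetition among them still lets us cut out the segment between the two cut points.\<close>
    have "\<exists>t\<in>nfa_run \<delta> {q} (take i w). s \<in> nfa_run \<delta> {t} (drop i w)" for i
      using less.prems mem_nfa_run_append[of s \<delta> q "take i w" "drop i w"] by simp
    then obtain t where t: "\<And>i. t i \<in> nfa_run \<delta> {q} (take i w)"
      "\<And>i. s \<in> nfa_run \<delta> {t i} (drop i w)"
      by metis
    have "t ` {..length w} \<subseteq> Q"
      using t(1) nfa_run_subset[OF nfa, of "{q}"] q by blast
    then have "card (t ` {..length w}) \<le> card Q"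
      using nfa card_mono unfolding nfa_def by blast
    then have "\<not> inj_on t {..length w}"
      using False by (intro pigeonhole) simp
    then obtain i j where ij: "i < j" "j \<le> length w" "t i = t j"
      unfolding inj_on_def by (metis atMost_iff linorder_neqE_nat)
    let ?w = "take i w @ drop j w"
    have "s \<in> nfa_run \<delta> {q} ?w"
      unfolding mem_nfa_run_append using t ij(3) by metis
    moreover have "length ?w < length w"
      using ij by simp
    ultimately show ?thesis
      using less.hyps by (meson le_less_trans less_imp_le_nat)
  qed
qed

definition insertions :: "'a list \<Rightarrow> 'a edit_op list" where
  "insertions w = map (\<lambda>b. (None, Some b)) w"

lemma length_insertions [simp]: "length (insertions w) = length w"
  by (simp add: insertions_def)

lemma edit_path_Nil [simp]: "edit_path [] x y \<longleftrightarrow> x = [] \<and> y = []"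
  by (auto simp: edit_path_def)

lemma edit_path_insertions: "edit_path (insertions w) [] w"
  by (simp add: edit_path_def insertions_def opt_word_def o_def)

lemma edit_path_insertions_edit:
  "edit_path p x y \<Longrightarrow>
   edit_path (insertions w @ (Some a, c) # p) (a # x) (w @ opt_word c @ y)"
  by (auto simp: edit_path_def insertions_def opt_word_def o_def)

lemma edit_path_ConsE:
  assumes "edit_path (e # p) x y"
  obtains (del) a x' where "e = (Some a, None)" "x = a # x'" "edit_path p x' y"
  | (ins) b y' where "e = (None, Some b)" "y = b # y'" "edit_path p x y'"
  | (sub) a b x' y' where "e = (Some a, Some b)" "x = a # x'" "y = b # y'" "edit_path p x' y'"
  using assms by (cases e) (auto simp: edit_path_def opt_word_def split: option.splits)

lemma edit_path_insertion_blockE: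
  assumes "edit_path p x y"
  obtains (insertions_only) "x = []" "p = insertions y"
  | (edit) w a c x' p' y' where "x = a # x'" "p = insertions w @ (Some a, c) # p'"
      "y = w @ opt_word c @ y'" "edit_path p' x' y'"
  using assms
proof (induction p arbitrary: y thesis)
  case Nil
  then show ?case by (simp add: insertions_def)
next
  case (Cons e p)
  from Cons.prems(3) show ?case
  proof (cases rule: edit_path_ConsE)
    case (del a x')
    then show ?thesis
      using Cons.prems(2)[of a x' "[]" None p y] by (simp add: insertions_def opt_word_def)
  next
    case (sub a b x' y')
    then show ?thesis
      using Cons.prems(2)[of a x' "[]" "Some b" p y'] by (simp add: insertions_def opt_word_def)
  next
    case (ins b y')
    show ?thesis
    proof (rule Cons.IH[OF _ _ \<open>edit_path p x y'\<close>])
      assume "x = []" "p = insertions y'"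
      then show ?thesis
        using Cons.prems(1) ins by (simp add: insertions_def)
    next
      fix w a c x'' p' y''
      assume "x = a # x''" "p = insertions w @ (Some a, c) # p'"
        "y' = w @ opt_word c @ y''" "edit_path p' x'' y''"
      then show ?thesis
        using Cons.prems(2)[of a x'' "b # w" c p' y''] ins by (simp add: insertions_def)
    qed
  qed
qed

lemma length_edit_path_le: "edit_path p x y \<Longrightarrow> length p \<le> length x + length y"
proof (induction p arbitrary: x y)
  case (Cons e p)
  from Cons.prems show ?case
    by (cases rule: edit_path_ConsE) (fastforce dest: Cons.IH)+
qed simp

lemma edit_path_exists: "\<exists>p. edit_path p x y"
proof -
  have "edit_path (map (\<lambda>a. (Some a, None)) x @ insertions y) x y"
    by (auto simp: edit_path_def insertions_def opt_word_def o_def)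
  then show ?thesis ..
qed

lemma wgt_Cons [simp]: "wgt (e # p) = (if fst e = snd e then 0 else 1) + wgt p"
  by (simp add: wgt_def)

lemma wgt_append [simp]: "wgt (p @ q) = wgt p + wgt q"
  by (simp add: wgt_def)

lemma wgt_insertions [simp]: "wgt (insertions w) = length w"
  by (simp add: wgt_def insertions_def o_def)

lemma wgt_le_length: "wgt p \<le> length p"
  by (simp add: wgt_def)

definition wgt_ratio :: "'a edit_op list \<Rightarrow> real" where
  "wgt_ratio p = real (wgt p) / real (length p)"

lemma wgt_ratio_remove_unit_weight:
  assumes "wgt p' + d = wgt p" and "length p' + d = length p"
  shows "wgt_ratio p' \<le> wgt_ratio p"
proof (cases "length p' = 0")
  case True
  then show ?thesis by (simp add: wgt_ratio_def)
next
  case False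
  have "wgt p' * d \<le> length p' * d"
    by (simp add: wgt_le_length)
  then have "wgt p' * length p \<le> wgt p * length p'"
    unfolding assms[symmetric] by (simp add: algebra_simps)
  then have "real (wgt p') * real (length p) \<le> real (wgt p) * real (length p')"
    by (metis of_nat_le_iff of_nat_mult)
  moreover have "0 < length p"
    using False assms(2) by linarith
  ultimately show ?thesis
    using False by (simp add: wgt_ratio_def divide_simps)
qed

lemma finite_wgt_ratios: "finite (wgt_ratio ` {p. P p \<and> length p \<le> N})"
proof -
  have "wgt_ratio ` {p. P p \<and> length p \<le> N} \<subseteq> (\<lambda>(k, m). real k / real m) ` ({..N} \<times> {..N})"
  proof (rule image_subsetI)
    fix p
    assume "p \<in> {p. P p \<and> length p \<le> N}"
    then have "(wgt p, length p) \<in> {..N} \<times> {..N}"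
      using wgt_le_length[of p] by auto
    then show "wgt_ratio p \<in> (\<lambda>(k, m). real k / real m) ` ({..N} \<times> {..N})"
      unfolding wgt_ratio_def by (rule rev_image_eqI) simp
  qed
  then show ?thesis
    by (rule finite_subset) simp
qed

lemma ex_min_wgt_ratio:
  assumes "P p\<^sub>0" and "length p\<^sub>0 \<le> N"
  obtains p where "P p" "length p \<le> N"
    "\<And>p'. P p' \<Longrightarrow> length p' \<le> N \<Longrightarrow> wgt_ratio p \<le> wgt_ratio p'"
proof -
  let ?S = "{p. P p \<and> length p \<le> N}"
  have "finite (wgt_ratio ` ?S)" and "wgt_ratio ` ?S \<noteq> {}"
    using finite_wgt_ratios assms by auto
  then obtain p where "p \<in> ?S" "wgt_ratio p = Min (wgt_ratio ` ?S)"
    by (metis (no_types, lifting) Min_in imageE)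
  with \<open>finite (wgt_ratio ` ?S)\<close> show thesis
    by (intro that) auto
qed

lemma optimal_edit_path:
  obtains p where "edit_path p x y" "ned x y = wgt_ratio p"
    "\<And>p'. edit_path p' x y \<Longrightarrow> wgt_ratio p \<le> wgt_ratio p'"
proof -
  let ?N = "length x + length y"
  obtain p\<^sub>0 where "edit_path p\<^sub>0 x y"
    using edit_path_exists by blast
  then obtain p where p: "edit_path p x y" and min: "\<And>p'. edit_path p' x y \<Longrightarrow> wgt_ratio p \<le> wgt_ratio p'"
    using ex_min_wgt_ratio[of "\<lambda>p. edit_path p x y" p\<^sub>0 ?N] length_edit_path_le by metis
  have "ned x y = wgt_ratio p"
  proof (cases "x = [] \<and> y = []")
    case True
    then show ?thesis
      using p length_edit_path_le[OF p] by (simp add: ned_def wgt_ratio_def)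
  next
    case False
    have "{real (wgt p) / real (length p) | p. edit_path p x y}
        = wgt_ratio ` {p. edit_path p x y \<and> length p \<le> ?N}"
      using length_edit_path_le by (auto simp: wgt_ratio_def)
    with False show ?thesis
      unfolding ned_def using finite_wgt_ratios p min length_edit_path_le[OF p]
      by (auto intro!: Min_eqI)
  qed
  then show thesis
    using that p min by blast
qed

text \<open>The witness d counts removed operations, all of them insertions and hence of weight one.\<close>

lemma edit_path_shorten_insertions:
  assumes nfa: "nfa Q \<delta> I F"
  shows "q \<in> Q \<Longrightarrow> edit_path p x y \<Longrightarrow> s \<in> nfa_run \<delta> {q} y \<Longrightarrow>
    \<exists>p' y' d. edit_path p' x y' \<and> s \<in> nfa_run \<delta> {q} y' \<and> length p' \<le> card Q * (length x + 1)
      \<and> wgt p' + d = wgt p \<and> length p' + d = length p"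
proof (induction x arbitrary: q p y)
  case Nil
  from Nil.prems(2) have p: "p = insertions y"
    by (cases rule: edit_path_insertion_blockE) auto
  obtain w where w: "s \<in> nfa_run \<delta> {q} w" "length w < card Q" "length w \<le> length y"
    using nfa_run_short_word[OF nfa Nil.prems(1,3)] by blast
  have "wgt (insertions w) + (length y - length w) = wgt p"
    and "length (insertions w) + (length y - length w) = length p"
    using w(3) p by simp_all
  then show ?case
    using w edit_path_insertions[of w] by fastforce
next
  case (Cons a x)
  from Cons.prems(2) obtain w c p\<^sub>1 y\<^sub>1 where p: "p = insertions w @ (Some a, c) # p\<^sub>1"
    and y: "y = w @ opt_word c @ y\<^sub>1" and p\<^sub>1: "edit_path p\<^sub>1 x y\<^sub>1"
    by (cases rule: edit_path_insertion_blockE) auto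
  from Cons.prems(3) obtain t u where t: "t \<in> nfa_run \<delta> {q} w"
    and u: "u \<in> nfa_run \<delta> {t} (opt_word c)" and s: "s \<in> nfa_run \<delta> {u} y\<^sub>1"
    unfolding y mem_nfa_run_append by blast
  have "t \<in> Q"
    using nfa_run_subset[OF nfa, of "{q}" w] Cons.prems(1) t by blast
  then have "u \<in> Q"
    using nfa_run_subset[OF nfa, of "{t}" "opt_word c"] u by blast
  obtain p\<^sub>1' y\<^sub>1' d where IH: "edit_path p\<^sub>1' x y\<^sub>1'" "s \<in> nfa_run \<delta> {u} y\<^sub>1'"
    "length p\<^sub>1' \<le> card Q * (length x + 1)" "wgt p\<^sub>1' + d = wgt p\<^sub>1" "length p\<^sub>1' + d = length p\<^sub>1"
    using Cons.IH[OF \<open>u \<in> Q\<close> p\<^sub>1 s] by blast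
  obtain w' where w': "t \<in> nfa_run \<delta> {q} w'" "length w' < card Q" "length w' \<le> length w"
    using nfa_run_short_word[OF nfa Cons.prems(1) t] by blast
  let ?p = "insertions w' @ (Some a, c) # p\<^sub>1'"
  let ?d = "d + (length w - length w')"
  have "edit_path ?p (a # x) (w' @ opt_word c @ y\<^sub>1')"
    using edit_path_insertions_edit[OF IH(1)] .
  moreover have "s \<in> nfa_run \<delta> {q} (w' @ opt_word c @ y\<^sub>1')"
    unfolding mem_nfa_run_append using w'(1) u IH(2) by blast
  moreover have "length ?p \<le> card Q * (length (a # x) + 1)"
    using w'(2) IH(3) by simp
  moreover have "wgt ?p + ?d = wgt p" and "length ?p + ?d = length p"
    using IH(4,5) w'(3) by (simp_all add: p)
  ultimately show ?case
    by blast
qed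

lemma nfa_lang_short_edit_path:
  assumes nfa: "nfa Q \<delta> I F" and y: "y \<in> nfa_lang \<delta> I F" and p: "edit_path p x y"
  obtains y' p' where "y' \<in> nfa_lang \<delta> I F" "edit_path p' x y'"
    "length p' \<le> card Q * (length x + 1)" "wgt_ratio p' \<le> wgt_ratio p"
proof -
  obtain q s where q: "q \<in> I" and s: "s \<in> F" "s \<in> nfa_run \<delta> {q} y"
    using y unfolding mem_nfa_lang by blast
  have "q \<in> Q"
    using nfa q unfolding nfa_def by blast
  then obtain p' y' d where "edit_path p' x y'" "s \<in> nfa_run \<delta> {q} y'"
    "length p' \<le> card Q * (length x + 1)" "wgt p' + d = wgt p" "length p' + d = length p"
    using edit_path_shorten_insertions[OF nfa _ p s(2)] by blast
  moreover have "y' \<in> nfa_lang \<delta> I F"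
    unfolding mem_nfa_lang using q s(1) calculation(2) by blast
  ultimately show thesis
    using that wgt_ratio_remove_unit_weight by blast
qed

lemma nfa_lang_ned_minimizer:
  assumes nfa: "nfa Q \<delta> I F" and ne: "nfa_lang \<delta> I F \<noteq> {}"
  obtains yx p where "yx \<in> nfa_lang \<delta> I F" "edit_path p x yx"
    "length p \<le> card Q * (length x + 1)" "ned x yx = wgt_ratio p"
    "\<And>y. y \<in> nfa_lang \<delta> I F \<Longrightarrow> ned x yx \<le> ned x y"
proof -
  let ?L = "nfa_lang \<delta> I F" and ?N = "card Q * (length x + 1)"
  obtain y\<^sub>0 p\<^sub>0 where "y\<^sub>0 \<in> ?L" "edit_path p\<^sub>0 x y\<^sub>0"
    using ne edit_path_exists by blast
  then obtain p\<^sub>1 where "\<exists>y\<in>?L. edit_path p\<^sub>1 x y" "length p\<^sub>1 \<le> ?N"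
    using nfa_lang_short_edit_path[OF nfa] by metis
  then obtain p where p: "\<exists>y\<in>?L. edit_path p x y" "length p \<le> ?N"
    and min: "\<And>p'. \<exists>y\<in>?L. edit_path p' x y \<Longrightarrow> length p' \<le> ?N \<Longrightarrow> wgt_ratio p \<le> wgt_ratio p'"
    by (rule ex_min_wgt_ratio) blast
  then obtain yx where yx: "yx \<in> ?L" "edit_path p x yx"
    by blast
  have lower: "wgt_ratio p \<le> ned x y" if y: "y \<in> ?L" for y
  proof -
    obtain q where q: "edit_path q x y" "ned x y = wgt_ratio q"
      using optimal_edit_path by blast
    obtain y' q' where "y' \<in> ?L" "edit_path q' x y'" "length q' \<le> ?N" "wgt_ratio q' \<le> wgt_ratio q"
      using nfa_lang_short_edit_path[OF nfa y q(1)] by blast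
    with q(2) min show ?thesis
      by fastforce
  qed
  have "ned x yx \<le> wgt_ratio p"
    using optimal_edit_path[of x yx] yx(2) by metis
  with lower[OF yx(1)] have "ned x yx = wgt_ratio p"
    by simp
  then show thesis
    using that yx p(2) lower by auto
qed

theorem mainTheorem14:
  fixes x :: "('a::finite) list" and Y :: "'a list set"
    and Q :: "'s set" and \<delta> :: "'s \<Rightarrow> 'a \<Rightarrow> 's set" and I F :: "'s set" and n :: nat
  assumes "nfa Q \<delta> I F" and "card Q = n" and "Y = nfa_lang \<delta> I F" and "Y \<noteq> {}"
  shows "\<exists>yx\<in>Y. ned x yx = (INF y\<in>Y. ned x y) \<and>
           (\<exists>p. edit_path p x yx \<and> real (wgt p) / real (length p) = ned x yx
                \<and> length p \<le> n * (length x + 1))"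
proof -
  obtain yx p where yx: "yx \<in> Y" "edit_path p x yx" "length p \<le> n * (length x + 1)"
    "ned x yx = wgt_ratio p" and min: "\<And>y. y \<in> Y \<Longrightarrow> ned x yx \<le> ned x y"
    using nfa_lang_ned_minimizer[OF assms(1)] assms(2-4) by metis
  have "(INF y\<in>Y. ned x y) = ned x yx"
    by (rule cInf_eq_minimum) (use yx(1) min in auto)
  with yx show ?thesis
    unfolding wgt_ratio_def by (auto intro!: bexI[OF _ yx(1)] exI[of _ p])
qed

end
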